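(* Let $k\ge2$ and set $z_{cr}=-\log\sigma+c_0\langle\sigma,\log\sigma\rangle\mathbf 1\in\Pi$. (i) For any $R>0$ and any $\epsilon>0$ small enough there exists $\eta=\eta(R,\epsilon)>0$ such that for all $z\in\Pi$ and $b\in\mathbb R^{k-1}$ with $|z|\le R$ and $|z-z_{cr}|+\min(|\cos b-\mathbf 1|,|\cos b+\mathbf 1|)\ge\epsilon$, one has $$|P_\sigma(\cos b\,e^{-z})|+|\sin b\,e^{-z}|\ge\eta.$$ (ii) There exist $\epsilon_0>0$ and $C>0$ such that for all $z\in\Pi$ and $b\in\mathbb R^{k-1}$ with $|z-z_{cr}|+|b-\pi\mathbf 1|\le\epsilon_0$, $$|P_\sigma(\cos b\,e^{-z})|+|\sin b\,e^{-z}|\ge C^{-1}\big(|z-z_{cr}|+|b-\pi\mathbf 1|\big).$$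
   Context: $\langle\cdot,\cdot\rangle$ and $|\cdot|$ are the Euclidean inner product and norm on $\mathbb R^{k-1}$; functions such as $\cos b$, $\sin b$, $e^{-z}$, $\log\sigma$ act componentwise, and $\cos b\,e^{-z}$ denotes the vector with components $\cos b_j\,e^{-z_j}$. $\mathbf 1=(1,\dots,1)$, $\sigma_j=\frac{j(k-j)}2$ for $j=1,\dots,k-1$, $c_0=1/\langle\sigma,\mathbf 1\rangle$, $\Pi=\{v\in\mathbb R^{k-1}:\langle\sigma,v\rangle=0\}$, and $P_\sigma v=v-\frac{\langle\sigma,v\rangle}{|\sigma|^2}\sigma$. *)

theory Defs
  imports "HOL-Analysis.Analysis"
begin

text \<open>Vectors in R^(k-1) are represented as functions nat => real; only the
components with index j in {1..<k} (i.e. j = 1..k-1) matter.\<close>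

definition vinner :: "nat \<Rightarrow> (nat \<Rightarrow> real) \<Rightarrow> (nat \<Rightarrow> real) \<Rightarrow> real" where
  "vinner k u v = (\<Sum>j\<in>{1..<k}. u j * v j)"

definition vnorm :: "nat \<Rightarrow> (nat \<Rightarrow> real) \<Rightarrow> real" where
  "vnorm k v = sqrt (vinner k v v)"

definition sigma :: "nat \<Rightarrow> nat \<Rightarrow> real" where
  "sigma k j = real j * (real k - real j) / 2"

definition c0 :: "nat \<Rightarrow> real" where
  "c0 k = 1 / vinner k (sigma k) (\<lambda>_. 1)"

definition PiSet :: "nat \<Rightarrow> (nat \<Rightarrow> real) set" where
  "PiSet k = {v. vinner k (sigma k) v = 0}"

definition Psigma :: "nat \<Rightarrow> (nat \<Rightarrow> real) \<Rightarrow> (nat \<Rightarrow> real)" where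
  "Psigma k v = (\<lambda>j. v j - vinner k (sigma k) v / (vnorm k (sigma k))\<^sup>2 * sigma k j)"

definition zcr :: "nat \<Rightarrow> nat \<Rightarrow> real" where
  "zcr k = (\<lambda>j. - ln (sigma k j) + c0 k * vinner k (sigma k) (\<lambda>i. ln (sigma k i)))"

definition Fq :: "nat \<Rightarrow> (nat \<Rightarrow> real) \<Rightarrow> (nat \<Rightarrow> real) \<Rightarrow> real" where
  "Fq k z b = vnorm k (Psigma k (\<lambda>j. cos (b j) * exp (- z j)))
            + vnorm k (\<lambda>j. sin (b j) * exp (- z j))"

end

theory Submission
  imports Defs
begin

(* Put zeta = z - zcr, so that zeta lies in Pi and exp(-z_j) = mu * sigma_j * exp(-zeta_j) for a
   constant mu > 0: the vector exp(-z) is a multiple of sigma exactly when zeta = 0.  Quantitatively,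
   since <sigma, zeta> = 0 the largest component of zeta is matched by a component of opposite sign,
   and the exponentials of these two components differ by a multiple of |zeta|; hence the distance
   from exp(-z) to the line through sigma controls |z - zcr| linearly.

   Near (zcr, pi 1) the sine part of the quantity is bounded below by a multiple of |b - pi 1|, while
   the projected cosine part differs from the distance of exp(-z) to that line by O(|b - pi 1|);
   combining the two gives (ii).  For (i), if the quantity is delta, the sine part forces
   1 - |cos b_j| = O(delta^2) and the projected cosine part then forces every cos b_j to carry the
   sign e of the projection coefficient; so cos b is within O(delta^2) of e 1 and exp(-z) within
   O(delta) of a multiple of sigma, and both distances in (i) are O(delta). *)

lemma vnorm_eq_L2_set: "vnorm k v = L2_set v {1..<k}"
  by (simp add: vnorm_def vinner_def L2_set_def power2_eq_square)

lemma vnorm_nonneg: "0 \<le> vnorm k v"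
  by (simp add: vnorm_eq_L2_set)

lemma vnorm_power2: "(vnorm k v)\<^sup>2 = (\<Sum>j\<in>{1..<k}. (v j)\<^sup>2)"
  by (simp add: vnorm_eq_L2_set L2_set_def sum_nonneg)

lemma vnorm_cong: "(\<And>j. j \<in> {1..<k} \<Longrightarrow> u j = v j) \<Longrightarrow> vnorm k u = vnorm k v"
  unfolding vnorm_eq_L2_set by (intro L2_set_cong) auto

lemma vnorm_abs: "vnorm k (\<lambda>j. \<bar>v j\<bar>) = vnorm k v"
  by (simp add: vnorm_eq_L2_set L2_set_def)

lemma vnorm_minus: "vnorm k (\<lambda>j. - v j) = vnorm k v"
  by (simp add: vnorm_eq_L2_set L2_set_def)

lemma vnorm_scale: "vnorm k (\<lambda>j. c * v j) = \<bar>c\<bar> * vnorm k v"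
  by (simp add: vnorm_eq_L2_set L2_set_def power_mult_distrib real_sqrt_mult
      flip: sum_distrib_left)

lemma vnorm_triangle: "vnorm k (\<lambda>j. u j + v j) \<le> vnorm k u + vnorm k v"
  unfolding vnorm_eq_L2_set by (rule L2_set_triangle_ineq)

lemma vnorm_mono:
  assumes "\<And>j. j \<in> {1..<k} \<Longrightarrow> \<bar>u j\<bar> \<le> \<bar>v j\<bar>"
  shows "vnorm k u \<le> vnorm k v"
proof -
  have "L2_set (\<lambda>j. \<bar>u j\<bar>) {1..<k} \<le> L2_set (\<lambda>j. \<bar>v j\<bar>) {1..<k}"
    by (rule L2_set_mono) (use assms in auto)
  then show ?thesis
    by (metis vnorm_abs vnorm_eq_L2_set)
qed

lemma abs_component_le_vnorm:
  assumes "j \<in> {1..<k}"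
  shows "\<bar>v j\<bar> \<le> vnorm k v"
proof -
  have "\<bar>v j\<bar> \<le> L2_set (\<lambda>j. \<bar>v j\<bar>) {1..<k}"
    by (rule member_le_L2_set) (use assms in auto)
  then show ?thesis
    by (simp only: vnorm_abs flip: vnorm_eq_L2_set)
qed

lemma vnorm_weighted_ge:
  assumes "0 < m" and "\<And>j. j \<in> {1..<k} \<Longrightarrow> m \<le> \<sigma> j"
  shows "m * vnorm k v \<le> vnorm k (\<lambda>j. \<sigma> j * v j)"
proof -
  have "vnorm k (\<lambda>j. m * v j) \<le> vnorm k (\<lambda>j. \<sigma> j * v j)"
  proof (rule vnorm_mono)
    fix j
    assume "j \<in> {1..<k}"
    then have "\<bar>m\<bar> \<le> \<bar>\<sigma> j\<bar>"
      using assms by (metis abs_of_pos order_trans abs_ge_self)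
    then show "\<bar>m * v j\<bar> \<le> \<bar>\<sigma> j * v j\<bar>"
      by (simp add: abs_mult mult_right_mono)
  qed
  then show ?thesis
    using assms(1) by (simp add: vnorm_scale)
qed

lemma abs_diff_component_le_vnorm:
  "j \<in> {1..<k} \<Longrightarrow> \<bar>u j - v j\<bar> \<le> vnorm k u + vnorm k v"
  using abs_component_le_vnorm[of j k u] abs_component_le_vnorm[of j k v]
    abs_triangle_ineq4[of "u j" "v j"]
  by linarith

lemma vnorm_le_uniform_bound:
  assumes "\<And>j. j \<in> {1..<k} \<Longrightarrow> \<bar>v j\<bar> \<le> M" and "0 \<le> M" and "1 \<le> k"
  shows "vnorm k v \<le> sqrt (real k - 1) * M"
proof -
  have "vnorm k v \<le> vnorm k (\<lambda>j. M)"
    by (rule vnorm_mono) (use assms in auto)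
  also have "\<dots> = sqrt (real k - 1) * M"
    using assms by (simp add: vnorm_eq_L2_set L2_set_constant of_nat_diff)
  finally show ?thesis .
qed

lemma vnorm_le_max_component:
  assumes "2 \<le> k"
  obtains p where "p \<in> {1..<k}" and "vnorm k v \<le> sqrt (real k - 1) * \<bar>v p\<bar>"
proof -
  let ?M = "Max ((\<lambda>j. \<bar>v j\<bar>) ` {1..<k})"
  have "?M \<in> (\<lambda>j. \<bar>v j\<bar>) ` {1..<k}"
    using assms by (intro Max_in) auto
  then obtain p where p: "p \<in> {1..<k}" "\<bar>v p\<bar> = ?M"
    by (metis (no_types, lifting) imageE)
  have max: "\<bar>v j\<bar> \<le> \<bar>v p\<bar>" if "j \<in> {1..<k}" for j
    using that p(2) by (simp add: Max_ge)
  have "vnorm k v \<le> sqrt (real k - 1) * \<bar>v p\<bar>"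
    by (rule vnorm_le_uniform_bound) (use max assms in auto)
  with p that show ?thesis by blast
qed

lemma abs_diff_components_le_vnorm:
  fixes v :: "nat \<Rightarrow> real"
  assumes p: "p \<in> {1..<k}" and q: "q \<in> {1..<k}"
  shows "\<bar>v p - v q\<bar> \<le> sqrt 2 * vnorm k v"
proof (cases "p = q")
  case True
  then show ?thesis by (simp add: vnorm_nonneg)
next
  case False
  have "(v p - v q)\<^sup>2 \<le> 2 * ((v p)\<^sup>2 + (v q)\<^sup>2)"
    using zero_le_power2[of "v p + v q"] by (simp add: power2_eq_square algebra_simps)
  also have "(v p)\<^sup>2 + (v q)\<^sup>2 = (\<Sum>j\<in>{p, q}. (v j)\<^sup>2)"
    using False by simp
  also have "\<dots> \<le> (\<Sum>j\<in>{1..<k}. (v j)\<^sup>2)"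
    by (rule sum_mono2) (use p q in auto)
  also have "\<dots> = (vnorm k v)\<^sup>2"
    by (simp add: vnorm_power2)
  finally have "(v p - v q)\<^sup>2 \<le> (sqrt 2 * vnorm k v)\<^sup>2"
    by (simp add: power_mult_distrib)
  then show ?thesis
    using vnorm_nonneg
    by (metis abs_le_square_iff abs_of_nonneg mult_nonneg_nonneg real_sqrt_ge_zero zero_le_numeral)
qed

lemma abs_sin_ge_half_abs:
  fixes x :: real
  assumes "\<bar>x\<bar> \<le> 1"
  shows "\<bar>x\<bar> / 2 \<le> \<bar>sin x\<bar>"
proof -
  have "(\<Sum>m<3. sin_coeff m * x ^ m) = x"
    by (simp add: sin_coeff_def numeral_3_eq_3)
  then have "\<bar>sin x - x\<bar> \<le> inverse (fact 3) * \<bar>x\<bar> ^ 3"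
    using Maclaurin_sin_bound[of x 3] by (simp only:)
  also have "inverse (fact 3) * \<bar>x\<bar> ^ 3 = \<bar>x\<bar> ^ 3 / 6"
    by (simp add: numeral_3_eq_3 field_simps)
  finally have "\<bar>sin x - x\<bar> \<le> \<bar>x\<bar> ^ 3 / 6" .
  moreover have "\<bar>x\<bar> ^ 3 \<le> \<bar>x\<bar>"
    using power_decreasing[of 1 3 "\<bar>x\<bar>"] assms by simp
  moreover have "\<bar>x\<bar> \<le> \<bar>sin x\<bar> + \<bar>sin x - x\<bar>"
    using abs_triangle_ineq4[of "sin x" "sin x - x"] by simp
  ultimately show ?thesis
    by linarith
qed

lemma one_minus_cos_le: "1 - cos x \<le> (x::real)\<^sup>2 / 2"
proof -
  have "\<bar>sin (x / 2)\<bar>\<^sup>2 \<le> \<bar>x / 2\<bar>\<^sup>2"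
    by (rule power_mono[OF abs_sin_x_le_abs_x]) simp
  then show ?thesis
    using cos_double_sin[of "x / 2"] by (simp add: power_divide)
qed

lemma one_minus_abs_cos_le: "1 - \<bar>cos x\<bar> \<le> (sin (x::real))\<^sup>2"
proof -
  have "\<bar>cos x\<bar> * \<bar>cos x\<bar> \<le> \<bar>cos x\<bar> * 1"
    by (intro mult_left_mono) auto
  then show ?thesis
    using sin_cos_squared_add[of x] by (simp add: power2_eq_square)
qed

lemma exp_diff_ge: "y - x \<le> exp (- x) * (exp y - exp (x::real))"
proof -
  have "exp (- x) * (exp y - exp x) = exp (y - x) - 1"
    using exp_add[of "- x" y] exp_add[of "- x" x] by (simp add: right_diff_distrib)
  then show ?thesis
    using exp_ge_add_one_self[of "y - x"] by linarith
qed

lemma abs_diff_le_exp_diff: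
  fixes x y :: real
  assumes "\<bar>x\<bar> \<le> D" and "\<bar>y\<bar> \<le> D"
  shows "\<bar>x - y\<bar> \<le> exp D * \<bar>exp x - exp y\<bar>"
proof -
  have *: "v - u \<le> exp D * (exp v - exp u)" if "u \<le> v" "\<bar>u\<bar> \<le> D" for u v :: real
  proof -
    have "exp (- u) \<le> exp D" and "0 \<le> exp v - exp u"
      using that by auto
    then show ?thesis
      using exp_diff_ge[of v u] by (meson mult_right_mono order_trans)
  qed
  show ?thesis
    using *[of x y] *[of y x] assms by (cases "x \<le> y") (auto simp: abs_if)
qed

lemma weighted_zero_sum_opposite_sign:
  fixes \<sigma> \<zeta> :: "'a \<Rightarrow> real"
  assumes "finite I" and "\<And>j. j \<in> I \<Longrightarrow> 0 < \<sigma> j"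
    and "(\<Sum>j\<in>I. \<sigma> j * \<zeta> j) = 0" and "p \<in> I"
  obtains q where "q \<in> I" and "\<zeta> q * \<zeta> p \<le> 0"
proof -
  have "\<exists>q\<in>I. \<zeta> q * \<zeta> p \<le> 0"
  proof (rule ccontr)
    assume "\<not> (\<exists>q\<in>I. \<zeta> q * \<zeta> p \<le> 0)"
    then have pos: "0 < \<sigma> q * (\<zeta> q * \<zeta> p)" if "q \<in> I" for q
      using that assms(2) by (meson mult_pos_pos not_le)
    have "0 < (\<Sum>j\<in>I. \<sigma> j * (\<zeta> j * \<zeta> p))"
      using assms(1,4) pos by (intro sum_pos) auto
    also have "\<dots> = (\<Sum>j\<in>I. \<sigma> j * \<zeta> j) * \<zeta> p"
      by (simp add: sum_distrib_right mult.assoc)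
    finally show False
      using assms(3) by simp
  qed
  with that show thesis
    by blast
qed

lemma vnorm_le_weighted_exp_deviation:
  fixes \<sigma> \<zeta> :: "nat \<Rightarrow> real"
  assumes k: "2 \<le> k" and m: "0 < m" "\<And>j. j \<in> {1..<k} \<Longrightarrow> m \<le> \<sigma> j"
    and balanced: "vinner k \<sigma> \<zeta> = 0"
    and D: "\<And>j. j \<in> {1..<k} \<Longrightarrow> \<bar>\<zeta> j\<bar> \<le> D"
  shows "vnorm k \<zeta>
    \<le> sqrt (2 * (real k - 1)) * exp D / m * vnorm k (\<lambda>j. \<sigma> j * (exp (- \<zeta> j) - s))"
proof -
  define v where "v j = exp (- \<zeta> j) - s" for j
  obtain p where p: "p \<in> {1..<k}" and max: "vnorm k \<zeta> \<le> sqrt (real k - 1) * \<bar>\<zeta> p\<bar>"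
    using vnorm_le_max_component[OF k] by blast
  have "0 < \<sigma> j" if "j \<in> {1..<k}" for j
    using m(1) m(2)[OF that] by linarith
  moreover have "(\<Sum>j\<in>{1..<k}. \<sigma> j * \<zeta> j) = 0"
    using balanced by (simp add: vinner_def)
  ultimately obtain q where q: "q \<in> {1..<k}" and opposite: "\<zeta> q * \<zeta> p \<le> 0"
    using weighted_zero_sum_opposite_sign[of "{1..<k}" \<sigma> \<zeta> p] p by blast
  have "\<bar>\<zeta> p\<bar> \<le> \<bar>\<zeta> p - \<zeta> q\<bar>"
    using opposite by (cases "0 \<le> \<zeta> p") (auto simp: mult_le_0_iff)
  also have "\<dots> \<le> exp D * \<bar>v p - v q\<bar>"
    using abs_diff_le_exp_diff[of "- \<zeta> p" D "- \<zeta> q"] D[OF p] D[OF q]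
    by (simp add: v_def abs_minus_commute)
  also have "\<dots> \<le> exp D * (sqrt 2 * vnorm k v)"
    using abs_diff_components_le_vnorm[OF p q] by simp
  also have "vnorm k v \<le> vnorm k (\<lambda>j. \<sigma> j * v j) / m"
    using vnorm_weighted_ge[of m k \<sigma> v] m by (simp add: field_simps)
  finally have "\<bar>\<zeta> p\<bar> \<le> exp D * sqrt 2 * vnorm k (\<lambda>j. \<sigma> j * v j) / m"
    by (simp add: mult_left_mono)
  then have "sqrt (real k - 1) * \<bar>\<zeta> p\<bar>
      \<le> sqrt (real k - 1) * (exp D * sqrt 2 * vnorm k (\<lambda>j. \<sigma> j * v j) / m)"
    using k by (intro mult_left_mono) auto
  then have "vnorm k \<zeta> \<le> sqrt (real k - 1) * (exp D * sqrt 2 * vnorm k (\<lambda>j. \<sigma> j * v j) / m)"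
    using max by linarith
  then show ?thesis
    unfolding real_sqrt_mult v_def by (simp add: mult_ac)
qed

lemma sigma_ge_half:
  assumes "j \<in> {1..<k}"
  shows "1 / 2 \<le> sigma k j"
proof -
  have "1 * 1 \<le> real j * (real k - real j)"
    using assms by (intro mult_mono) auto
  then show ?thesis
    by (simp add: sigma_def)
qed

lemma sigma_pos: "j \<in> {1..<k} \<Longrightarrow> 0 < sigma k j"
  using sigma_ge_half[of j k] by linarith

lemma sigma_le_square:
  assumes "j \<in> {1..<k}"
  shows "sigma k j \<le> (real k)\<^sup>2"
proof -
  have "real j * (real k - real j) \<le> real k * real k"
    using assms by (intro mult_mono) auto
  moreover have "0 \<le> real k * real k"
    by simp
  ultimately show ?thesis
    unfolding sigma_def power2_eq_square by linarith
qed

lemma zcr_in_PiSet: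
  assumes "2 \<le> k"
  shows "zcr k \<in> PiSet k"
proof -
  define S where "S = vinner k (sigma k) (\<lambda>i. ln (sigma k i))"
  define \<Sigma> where "\<Sigma> = (\<Sum>j\<in>{1..<k}. sigma k j)"
  have "0 < \<Sigma>"
    unfolding \<Sigma>_def using assms sigma_pos by (intro sum_pos) auto
  then have c0: "c0 k * \<Sigma> = 1"
    by (simp add: c0_def vinner_def \<Sigma>_def)
  have "vinner k (sigma k) (zcr k) = (\<Sum>j\<in>{1..<k}. sigma k j * (c0 k * S) - sigma k j * ln (sigma k j))"
    unfolding vinner_def zcr_def S_def by (intro sum.cong) (auto simp: algebra_simps)
  also have "\<dots> = \<Sigma> * (c0 k * S) - S"
    by (simp add: sum_subtractf \<Sigma>_def S_def vinner_def sum_distrib_right)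
  also have "\<dots> = 0"
    using c0 by (simp add: algebra_simps)
  finally show ?thesis
    by (simp add: PiSet_def)
qed

definition crit_scale :: "nat \<Rightarrow> real" where
  "crit_scale k = exp (- c0 k * vinner k (sigma k) (\<lambda>i. ln (sigma k i)))"

lemma crit_scale_pos: "0 < crit_scale k"
  by (simp add: crit_scale_def)

lemma exp_minus_zcr:
  assumes "j \<in> {1..<k}"
  shows "exp (- zcr k j) = crit_scale k * sigma k j"
proof -
  have "- zcr k j = ln (sigma k j) + - (c0 k * vinner k (sigma k) (\<lambda>i. ln (sigma k i)))"
    by (simp add: zcr_def)
  then show ?thesis
    using sigma_pos[OF assms] by (simp add: exp_diff exp_minus crit_scale_def field_simps)
qed

lemma exp_minus_eq_crit_scale:
  assumes "j \<in> {1..<k}"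
  shows "exp (- z j) = crit_scale k * sigma k j * exp (zcr k j - z j)"
  using exp_minus_zcr[OF assms] exp_add[of "- zcr k j" "zcr k j - z j"] by simp

lemma exp_minus_bounds_near_zcr:
  assumes j: "j \<in> {1..<k}" and z: "\<bar>z j - zcr k j\<bar> \<le> 1"
  shows "crit_scale k * (1 / 2 * exp (- 1)) \<le> exp (- z j)"
    and "exp (- z j) \<le> crit_scale k * ((real k)\<^sup>2 * exp 1)"
proof -
  have e: "exp (- 1) \<le> exp (zcr k j - z j)" "exp (zcr k j - z j) \<le> exp 1"
    using z by auto
  have "1 / 2 * exp (- 1) \<le> sigma k j * exp (zcr k j - z j)"
    using sigma_ge_half[OF j] e by (intro mult_mono) auto
  moreover have "sigma k j * exp (zcr k j - z j) \<le> (real k)\<^sup>2 * exp 1"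
    using sigma_le_square[OF j] sigma_pos[OF j] e by (intro mult_mono) auto
  moreover have "exp (- z j) = crit_scale k * (sigma k j * exp (zcr k j - z j))"
    using exp_minus_eq_crit_scale[OF j, of z] by (simp add: mult.assoc)
  ultimately show "crit_scale k * (1 / 2 * exp (- 1)) \<le> exp (- z j)"
    and "exp (- z j) \<le> crit_scale k * ((real k)\<^sup>2 * exp 1)"
    using crit_scale_pos[of k] by (metis less_imp_le mult_left_mono)+
qed

lemma vnorm_shift_le_dist_to_sigma_multiple:
  assumes k: "2 \<le> k" and z: "z \<in> PiSet k"
    and D: "\<And>j. j \<in> {1..<k} \<Longrightarrow> \<bar>z j - zcr k j\<bar> \<le> D"
  shows "vnorm k (\<lambda>j. z j - zcr k j)
      \<le> 2 * sqrt (2 * (real k - 1)) * exp D / crit_scale k * vnorm k (\<lambda>j. exp (- z j) - s * sigma k j)"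
proof -
  define \<mu> where "\<mu> = crit_scale k"
  have \<mu>: "0 < \<mu>"
    by (simp add: \<mu>_def crit_scale_pos)
  have "vinner k (sigma k) (\<lambda>j. z j - zcr k j) = vinner k (sigma k) z - vinner k (sigma k) (zcr k)"
    by (simp add: vinner_def algebra_simps sum_subtractf)
  then have balanced: "vinner k (sigma k) (\<lambda>j. z j - zcr k j) = 0"
    using z zcr_in_PiSet[OF k] by (simp add: PiSet_def)
  have "vnorm k (\<lambda>j. exp (- z j) - s * sigma k j)
      = vnorm k (\<lambda>j. \<mu> * (sigma k j * (exp (- (z j - zcr k j)) - s / \<mu>)))"
  proof (rule vnorm_cong)
    fix j
    assume "j \<in> {1..<k}"
    then show "exp (- z j) - s * sigma k j = \<mu> * (sigma k j * (exp (- (z j - zcr k j)) - s / \<mu>))"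
      using \<mu> exp_minus_eq_crit_scale[of j k z] by (simp add: \<mu>_def field_simps)
  qed
  also have "\<dots> = \<mu> * vnorm k (\<lambda>j. sigma k j * (exp (- (z j - zcr k j)) - s / \<mu>))"
    using \<mu> by (simp add: vnorm_scale)
  finally have "vnorm k (\<lambda>j. sigma k j * (exp (- (z j - zcr k j)) - s / \<mu>))
      = vnorm k (\<lambda>j. exp (- z j) - s * sigma k j) / \<mu>"
    using \<mu> by (simp add: field_simps)
  with vnorm_le_weighted_exp_deviation[OF k _ sigma_ge_half balanced D, where s = "s / \<mu>"]
  show ?thesis
    by (simp add: \<mu>_def mult_ac)
qed

lemma vnorm_sin_mul_ge:
  assumes b: "\<And>j. j \<in> {1..<k} \<Longrightarrow> \<bar>b j - pi\<bar> \<le> 1"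
    and w: "\<And>j. j \<in> {1..<k} \<Longrightarrow> a \<le> \<bar>w j\<bar>" and a: "0 \<le> a"
  shows "a / 2 * vnorm k (\<lambda>j. b j - pi) \<le> vnorm k (\<lambda>j. sin (b j) * w j)"
proof -
  have "vnorm k (\<lambda>j. a / 2 * (b j - pi)) \<le> vnorm k (\<lambda>j. sin (b j) * w j)"
  proof (rule vnorm_mono)
    fix j
    assume j: "j \<in> {1..<k}"
    have "\<bar>b j - pi\<bar> / 2 \<le> \<bar>sin (b j)\<bar>"
      using abs_sin_ge_half_abs[OF b[OF j]] by (simp add: sin_diff)
    then have "a * (\<bar>b j - pi\<bar> / 2) \<le> \<bar>w j\<bar> * \<bar>sin (b j)\<bar>"
      using w[OF j] a by (intro mult_mono) auto
    then show "\<bar>a / 2 * (b j - pi)\<bar> \<le> \<bar>sin (b j) * w j\<bar>"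
      using a by (simp add: abs_mult mult_ac)
  qed
  moreover have "\<bar>a / 2\<bar> = a / 2"
    using a by simp
  ultimately show ?thesis
    by (simp only: vnorm_scale)
qed

lemma vnorm_cos_plus_one_mul_le:
  assumes b: "\<And>j. j \<in> {1..<k} \<Longrightarrow> \<bar>b j - pi\<bar> \<le> 1"
    and w: "\<And>j. j \<in> {1..<k} \<Longrightarrow> \<bar>w j\<bar> \<le> A" and A: "0 \<le> A"
  shows "vnorm k (\<lambda>j. (cos (b j) + 1) * w j) \<le> A * vnorm k (\<lambda>j. b j - pi)"
proof -
  have "vnorm k (\<lambda>j. (cos (b j) + 1) * w j) \<le> vnorm k (\<lambda>j. A * (b j - pi))"
  proof (rule vnorm_mono)
    fix j
    assume j: "j \<in> {1..<k}"
    have "cos (b j) + 1 = 1 - cos (b j - pi)"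
      by (simp add: cos_diff)
    also have "\<dots> \<le> (b j - pi)\<^sup>2 / 2"
      by (rule one_minus_cos_le)
    also have "\<dots> \<le> \<bar>b j - pi\<bar>"
    proof -
      have "\<bar>b j - pi\<bar> * \<bar>b j - pi\<bar> \<le> \<bar>b j - pi\<bar> * 1"
        using b[OF j] by (intro mult_left_mono) auto
      then have "(b j - pi) * (b j - pi) \<le> \<bar>b j - pi\<bar>"
        by simp
      then show ?thesis
        using abs_ge_zero[of "b j - pi"] unfolding power2_eq_square by linarith
    qed
    finally have "\<bar>cos (b j) + 1\<bar> \<le> \<bar>b j - pi\<bar>"
      using cos_ge_minus_one[of "b j"] abs_ge_zero[of "b j - pi"] unfolding abs_le_iff by linarith
    then have "\<bar>cos (b j) + 1\<bar> * \<bar>w j\<bar> \<le> \<bar>b j - pi\<bar> * A"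
      using w[OF j] by (intro mult_mono) auto
    then show "\<bar>(cos (b j) + 1) * w j\<bar> \<le> \<bar>A * (b j - pi)\<bar>"
      using A by (simp add: abs_mult mult_ac)
  qed
  moreover have "\<bar>A\<bar> = A"
    using A by simp
  ultimately show ?thesis
    by (simp only: vnorm_scale)
qed
lemma vnorm_shift_le_proj_cos_part:
  assumes k: "2 \<le> k" and z: "z \<in> PiSet k"
    and D: "\<And>j. j \<in> {1..<k} \<Longrightarrow> \<bar>z j - zcr k j\<bar> \<le> D"
  shows "vnorm k (\<lambda>j. z j - zcr k j)
      \<le> 2 * sqrt (2 * (real k - 1)) * exp D / crit_scale k
        * (vnorm k (Psigma k (\<lambda>j. cos (b j) * exp (- z j)))
           + vnorm k (\<lambda>j. (cos (b j) + 1) * exp (- z j)))"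
proof -
  define T where "T = vinner k (sigma k) (\<lambda>j. cos (b j) * exp (- z j)) / (vnorm k (sigma k))\<^sup>2"
  have "vnorm k (\<lambda>j. exp (- z j) - (- T) * sigma k j)
      = vnorm k (\<lambda>j. - (cos (b j) * exp (- z j) - T * sigma k j) + (cos (b j) + 1) * exp (- z j))"
    by (rule vnorm_cong) (simp add: algebra_simps)
  also have "\<dots> \<le> vnorm k (Psigma k (\<lambda>j. cos (b j) * exp (- z j)))
      + vnorm k (\<lambda>j. (cos (b j) + 1) * exp (- z j))"
    using vnorm_triangle[of k "\<lambda>j. - (cos (b j) * exp (- z j) - T * sigma k j)"
        "\<lambda>j. (cos (b j) + 1) * exp (- z j)"]
    by (simp only: vnorm_minus Psigma_def T_def)
  finally have "vnorm k (\<lambda>j. exp (- z j) - (- T) * sigma k j)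
      \<le> vnorm k (Psigma k (\<lambda>j. cos (b j) * exp (- z j)))
        + vnorm k (\<lambda>j. (cos (b j) + 1) * exp (- z j))" .
  moreover have "0 \<le> 2 * sqrt (2 * (real k - 1)) * exp D / crit_scale k"
    using k crit_scale_pos[of k] by (intro divide_nonneg_pos mult_nonneg_nonneg) auto
  ultimately show ?thesis
    using vnorm_shift_le_dist_to_sigma_multiple[OF k z, of D "- T"] D
    by (meson mult_left_mono order_trans)
qed

lemma Fq_ge_proj_part: "vnorm k (Psigma k (\<lambda>j. cos (b j) * exp (- z j))) \<le> Fq k z b"
  using vnorm_nonneg[of k "\<lambda>j. sin (b j) * exp (- z j)"] by (simp add: Fq_def)

lemma Fq_ge_sin_part: "vnorm k (\<lambda>j. sin (b j) * exp (- z j)) \<le> Fq k z b"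
  using vnorm_nonneg[of k "Psigma k (\<lambda>j. cos (b j) * exp (- z j))"] by (simp add: Fq_def)

lemma Fq_controls_distance_near_critical:
  assumes k: "2 \<le> k"
  obtains K where "0 < K"
    and "\<And>z b. z \<in> PiSet k \<Longrightarrow> vnorm k (\<lambda>j. z j - zcr k j) + vnorm k (\<lambda>j. b j - pi) \<le> 1 \<Longrightarrow>
      vnorm k (\<lambda>j. z j - zcr k j) + vnorm k (\<lambda>j. b j - pi) \<le> K * Fq k z b"
proof -
  define \<mu> where "\<mu> = crit_scale k"
  define a where "a = \<mu> * (1 / 2 * exp (- 1))"
  define W where "W = \<mu> * ((real k)\<^sup>2 * exp 1)"
  define L where "L = 2 * sqrt (2 * (real k - 1)) * exp 1 / \<mu>"
  define K where "K = L * (1 + W * (2 / a)) + 2 / a"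
  have \<mu>: "0 < \<mu>"
    by (simp add: \<mu>_def crit_scale_pos)
  have a: "0 < a" and W: "0 \<le> W" and L: "0 \<le> L"
    using \<mu> k by (simp_all add: a_def W_def L_def)
  have "0 < K"
    using a W L by (simp add: K_def add_nonneg_pos)
  moreover have "nz + nb \<le> K * Fq k z b"
    if z: "z \<in> PiSet k" and small: "nz + nb \<le> 1"
      and nz_def: "nz = vnorm k (\<lambda>j. z j - zcr k j)" and nb_def: "nb = vnorm k (\<lambda>j. b j - pi)"
    for z b nz nb
  proof -
    have zj: "\<bar>z j - zcr k j\<bar> \<le> 1" and bj: "\<bar>b j - pi\<bar> \<le> 1" if j: "j \<in> {1..<k}" for j
      using abs_component_le_vnorm[OF j, of "\<lambda>j. z j - zcr k j"]
        abs_component_le_vnorm[OF j, of "\<lambda>j. b j - pi"] small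
        vnorm_nonneg[of k "\<lambda>j. z j - zcr k j"] vnorm_nonneg[of k "\<lambda>j. b j - pi"]
      unfolding nz_def nb_def by linarith+
    define w where "w j = exp (- z j)" for j
    have w_lower: "a \<le> \<bar>w j\<bar>" and w_upper: "\<bar>w j\<bar> \<le> W" if j: "j \<in> {1..<k}" for j
      using exp_minus_bounds_near_zcr[OF j, of z] zj[OF j] by (simp_all add: w_def a_def W_def \<mu>_def)
    have "a / 2 * nb \<le> Fq k z b"
      using vnorm_sin_mul_ge[of k b a w, OF bj w_lower less_imp_le[OF a]] Fq_ge_sin_part[of k b z]
      unfolding nb_def w_def by linarith
    then have nb: "nb \<le> 2 / a * Fq k z b"
      using a by (simp add: field_simps)
    have "nz \<le> L * (vnorm k (Psigma k (\<lambda>j. cos (b j) * w j))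
        + vnorm k (\<lambda>j. (cos (b j) + 1) * w j))"
      using vnorm_shift_le_proj_cos_part[OF k z, of 1 b] zj
      by (simp add: nz_def L_def \<mu>_def w_def)
    also have "\<dots> \<le> L * (Fq k z b + W * (2 / a * Fq k z b))"
    proof -
      have "vnorm k (\<lambda>j. (cos (b j) + 1) * w j) \<le> W * (2 / a * Fq k z b)"
        using vnorm_cos_plus_one_mul_le[of k b w W, OF bj w_upper W] mult_left_mono[OF nb W]
        unfolding nb_def by linarith
      then show ?thesis
        using Fq_ge_proj_part[of k b z] L by (intro mult_left_mono add_mono) (auto simp: w_def)
    qed
    finally show ?thesis
      using nb by (simp add: K_def algebra_simps)
  qed
  ultimately show thesis
    using that by blast
qed

lemma sign_of_close_multiple:
  fixes c w t s \<delta> :: real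
  assumes close: "\<bar>c * w - t * s\<bar> \<le> \<delta>" and large: "\<delta> < \<bar>c\<bar> * w"
    and "0 < w" "0 < s"
  shows "(if 0 < t then 1 else - 1) * c = \<bar>c\<bar>"
proof (cases "0 < t")
  case True
  have "0 < c"
  proof (rule ccontr)
    assume "\<not> 0 < c"
    then have "c * w \<le> 0" and "\<bar>c\<bar> * w = - (c * w)"
      using assms(3) by (simp_all add: mult_nonpos_nonneg)
    moreover have "0 < t * s"
      using True assms(4) by simp
    ultimately show False
      using close large by linarith
  qed
  then show ?thesis
    using True by simp
next
  case False
  have "c < 0"
  proof (rule ccontr)
    assume "\<not> c < 0"
    then have "\<bar>c\<bar> * w = c * w"
      by simp
    moreover have "t * s \<le> 0"
      using False assms(4) by (simp add: mult_nonpos_nonneg)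
    ultimately show False
      using close large by linarith
  qed
  then show ?thesis
    using False by simp
qed

lemma sign_aligned_bounds:
  fixes c w t s \<delta> :: real
  assumes close: "\<bar>c * w - t * s\<bar> \<le> \<delta>" and large: "\<delta> < \<bar>c\<bar> * w"
    and "0 < w" "0 < s" "\<bar>c\<bar> \<le> 1"
  defines "e \<equiv> if 0 < t then 1 else - 1"
  shows "\<bar>w - e * t * s\<bar> \<le> \<delta> + (1 - \<bar>c\<bar>) * w" and "\<bar>c - e\<bar> = 1 - \<bar>c\<bar>"
proof -
  have sign: "e * c = \<bar>c\<bar>"
    unfolding e_def using sign_of_close_multiple[OF close large assms(3,4)] .
  have e: "\<bar>e\<bar> = 1" "e * e = 1"
    by (simp_all add: e_def)
  have "w - e * t * s = e * (c * w - t * s) + (1 - e * c) * w"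
    by (simp add: algebra_simps)
  also have "\<dots> = e * (c * w - t * s) + (1 - \<bar>c\<bar>) * w"
    by (simp only: sign)
  finally have "\<bar>w - e * t * s\<bar> \<le> \<bar>e * (c * w - t * s)\<bar> + \<bar>(1 - \<bar>c\<bar>) * w\<bar>"
    by (simp only: abs_triangle_ineq)
  also have "\<dots> = \<bar>c * w - t * s\<bar> + (1 - \<bar>c\<bar>) * w"
    using e(1) assms(3,5) by (simp add: abs_mult)
  finally show "\<bar>w - e * t * s\<bar> \<le> \<delta> + (1 - \<bar>c\<bar>) * w"
    using close by linarith
  have "c - e = e * (e * c - 1)"
    using e(2) by (simp add: algebra_simps)
  then show "\<bar>c - e\<bar> = 1 - \<bar>c\<bar>"
    using sign e(1) assms(5) by (simp add: abs_mult)
qed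

lemma cos_aligned_of_small_residuals:
  fixes x w t s \<delta> a A :: real
  assumes close: "\<bar>cos x * w - t * s\<bar> \<le> \<delta>" and sin: "\<bar>sin x * w\<bar> \<le> \<delta>"
    and a: "0 < a" "a \<le> w" "\<delta> < a / 2" and "w \<le> A" "0 < s"
  defines "e \<equiv> if 0 < t then 1 else - 1"
  shows "\<bar>w - e * t * s\<bar> \<le> \<delta> + (\<delta> / a)\<^sup>2 * A" and "\<bar>cos x - e\<bar> \<le> (\<delta> / a)\<^sup>2"
proof -
  define \<rho> where "\<rho> = (\<delta> / a)\<^sup>2"
  have "0 \<le> \<delta>"
    using order_trans[OF abs_ge_zero close] .
  moreover have "\<delta> / a < 1 / 2"
    using a by (simp add: field_simps)
  ultimately have \<rho>: "0 \<le> \<rho>" "\<rho> \<le> 1 / 4"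
    using a power_mono[of "\<delta> / a" "1 / 2" 2] by (auto simp: \<rho>_def power_divide)
  have "\<bar>sin x\<bar> * a \<le> \<bar>sin x\<bar> * w"
    using a by (simp add: mult_left_mono)
  also have "\<dots> \<le> \<delta>"
    using sin a by (simp add: abs_mult)
  finally have "\<bar>sin x\<bar> \<le> \<delta> / a"
    using a by (simp add: field_simps)
  then have "(sin x)\<^sup>2 \<le> \<rho>"
    unfolding \<rho>_def by (metis abs_ge_zero power2_abs power_mono)
  then have cos_close: "1 - \<bar>cos x\<bar> \<le> \<rho>"
    using one_minus_abs_cos_le[of x] by linarith
  have "3 / 4 * a \<le> \<bar>cos x\<bar> * w"
    using cos_close \<rho> a by (intro mult_mono) auto
  then have large: "\<delta> < \<bar>cos x\<bar> * w"
    using a by linarith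
  note aligned = sign_aligned_bounds[OF close large _ \<open>0 < s\<close> abs_cos_le_one, folded e_def]
  have "(1 - \<bar>cos x\<bar>) * w \<le> \<rho> * A"
    by (rule mult_mono) (use cos_close \<rho>(1) \<open>w \<le> A\<close> a in auto)
  then show "\<bar>w - e * t * s\<bar> \<le> \<delta> + (\<delta> / a)\<^sup>2 * A" and "\<bar>cos x - e\<bar> \<le> (\<delta> / a)\<^sup>2"
    using aligned a cos_close unfolding \<rho>_def by auto
qed

lemma small_Fq_imp_aligned:
  assumes a: "0 < a" and w_lower: "\<And>j. j \<in> {1..<k} \<Longrightarrow> a \<le> exp (- z j)"
    and w_upper: "\<And>j. j \<in> {1..<k} \<Longrightarrow> exp (- z j) \<le> A"
    and small: "Fq k z b < a / 2"
  obtains e t where "\<bar>e\<bar> = 1"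
    and "\<And>j. j \<in> {1..<k} \<Longrightarrow>
      \<bar>exp (- z j) - e * t * sigma k j\<bar> \<le> Fq k z b + (Fq k z b / a)\<^sup>2 * A"
    and "\<And>j. j \<in> {1..<k} \<Longrightarrow> \<bar>cos (b j) - e\<bar> \<le> (Fq k z b / a)\<^sup>2"
proof -
  define w where "w j = exp (- z j)" for j
  define T where "T = vinner k (sigma k) (\<lambda>j. cos (b j) * w j) / (vnorm k (sigma k))\<^sup>2"
  define e :: real where "e = (if 0 < T then 1 else - 1)"
  have F: "Fq k z b
      = vnorm k (\<lambda>j. cos (b j) * w j - T * sigma k j) + vnorm k (\<lambda>j. sin (b j) * w j)"
    by (simp add: Fq_def Psigma_def T_def w_def)
  have "\<bar>w j - e * T * sigma k j\<bar> \<le> Fq k z b + (Fq k z b / a)\<^sup>2 * A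
      \<and> \<bar>cos (b j) - e\<bar> \<le> (Fq k z b / a)\<^sup>2"
    if j: "j \<in> {1..<k}" for j
  proof -
    have "\<bar>cos (b j) * w j - T * sigma k j\<bar> \<le> Fq k z b"
      using abs_component_le_vnorm[OF j, of "\<lambda>j. cos (b j) * w j - T * sigma k j"] F
        vnorm_nonneg[of k "\<lambda>j. sin (b j) * w j"] by linarith
    moreover have "\<bar>sin (b j) * w j\<bar> \<le> Fq k z b"
      using abs_component_le_vnorm[OF j, of "\<lambda>j. sin (b j) * w j"] F
        vnorm_nonneg[of k "\<lambda>j. cos (b j) * w j - T * sigma k j"] by linarith
    ultimately show ?thesis
      using cos_aligned_of_small_residuals[OF _ _ a _ small _ sigma_pos[OF j], of "b j" "w j" T A]
        w_lower[OF j] w_upper[OF j]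
      unfolding w_def e_def by blast
  qed
  moreover have "\<bar>e\<bar> = 1"
    by (simp add: e_def)
  ultimately show thesis
    using that unfolding w_def by blast
qed

lemma min_vnorm_plus_minus_one_le:
  assumes "\<bar>e\<bar> = 1" and "\<And>j. j \<in> {1..<k} \<Longrightarrow> \<bar>c j - e\<bar> \<le> \<rho>"
    and "0 \<le> \<rho>" and "1 \<le> k"
  shows "min (vnorm k (\<lambda>j. c j - 1)) (vnorm k (\<lambda>j. c j + 1)) \<le> sqrt (real k - 1) * \<rho>"
proof -
  have "min (vnorm k (\<lambda>j. c j - 1)) (vnorm k (\<lambda>j. c j + 1)) \<le> vnorm k (\<lambda>j. c j - e)"
    using assms(1) by (auto simp: abs_if split: if_splits)
  also have "\<dots> \<le> sqrt (real k - 1) * \<rho>"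
    using assms(2-4) by (intro vnorm_le_uniform_bound) auto
  finally show ?thesis .
qed

lemma Fq_controls_distance_on_ball:
  assumes k: "2 \<le> k" and R: "0 < R"
  obtains K where "0 < K"
    and "\<And>z b. z \<in> PiSet k \<Longrightarrow> vnorm k z \<le> R \<Longrightarrow> Fq k z b < exp (- R) / 2 \<Longrightarrow>
      vnorm k (\<lambda>j. z j - zcr k j) + min (vnorm k (\<lambda>j. cos (b j) - 1)) (vnorm k (\<lambda>j. cos (b j) + 1))
        \<le> K * Fq k z b"
proof -
  define a where "a = exp (- R)"
  define A where "A = exp R"
  define D where "D = R + vnorm k (zcr k)"
  define q where "q = sqrt (real k - 1)"
  define L where "L = 2 * sqrt (2 * (real k - 1)) * exp D / crit_scale k"
  define K where "K = L * q * (1 + A / a\<^sup>2) + q / a\<^sup>2"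
  have a: "0 < a" "a \<le> 1" and A: "0 < A" and q: "0 < q"
    using k R by (simp_all add: a_def A_def q_def)
  have L: "0 \<le> L"
    unfolding L_def using k crit_scale_pos[of k] by (intro divide_nonneg_pos mult_nonneg_nonneg) auto
  have "0 < K"
    using a A q L by (simp add: K_def add_nonneg_pos)
  moreover have "nz + mn \<le> K * Fq k z b"
    if z: "z \<in> PiSet k" and zR: "vnorm k z \<le> R" and small: "Fq k z b < a / 2"
      and nz_def: "nz = vnorm k (\<lambda>j. z j - zcr k j)"
      and mn_def: "mn = min (vnorm k (\<lambda>j. cos (b j) - 1)) (vnorm k (\<lambda>j. cos (b j) + 1))"
    for z b nz mn
  proof -
    define \<delta> where "\<delta> = Fq k z b"
    define \<rho> where "\<rho> = (\<delta> / a)\<^sup>2"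
    have zj: "\<bar>z j\<bar> \<le> R" if "j \<in> {1..<k}" for j
      using abs_component_le_vnorm[OF that, of z] zR by linarith
    have "a \<le> exp (- z j)" "exp (- z j) \<le> A" if "j \<in> {1..<k}" for j
      using zj[OF that] by (auto simp: a_def A_def)
    then obtain e t where e: "\<bar>e\<bar> = 1"
      and w: "\<And>j. j \<in> {1..<k} \<Longrightarrow> \<bar>exp (- z j) - e * t * sigma k j\<bar> \<le> \<delta> + \<rho> * A"
      and c: "\<And>j. j \<in> {1..<k} \<Longrightarrow> \<bar>cos (b j) - e\<bar> \<le> \<rho>"
      using small_Fq_imp_aligned[OF a(1) _ _ small, of A] unfolding \<delta>_def \<rho>_def by blast
    have \<delta>: "0 \<le> \<delta>" "\<delta> \<le> 1"
      using small a by (auto simp: \<delta>_def Fq_def vnorm_nonneg)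
    have \<rho>: "0 \<le> \<rho>" "\<rho> \<le> \<delta> / a\<^sup>2"
      using \<delta> mult_left_mono[of \<delta> 1 \<delta>]
      by (auto simp: \<rho>_def power_divide power2_eq_square divide_right_mono)
    have mn: "mn \<le> q * \<rho>"
      unfolding mn_def q_def
      using min_vnorm_plus_minus_one_le[where c = "\<lambda>j. cos (b j)", OF e c] \<rho> k by simp
    have "\<bar>z j - zcr k j\<bar> \<le> D" if "j \<in> {1..<k}" for j
      using abs_diff_component_le_vnorm[OF that, of z "zcr k"] zR by (simp add: D_def)
    then have "nz \<le> L * vnorm k (\<lambda>j. exp (- z j) - e * t * sigma k j)"
      using vnorm_shift_le_dist_to_sigma_multiple[OF k z, of D "e * t"]
      unfolding nz_def L_def by (simp add: mult_ac)
    also have "\<dots> \<le> L * (q * (\<delta> + \<rho> * A))"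
      unfolding q_def using w \<delta> \<rho> A k L
      by (intro mult_left_mono vnorm_le_uniform_bound) auto
    finally have "nz + mn \<le> L * q * (\<delta> + \<rho> * A) + q * \<rho>"
      using mn by (simp add: mult_ac)
    also have "\<dots> \<le> L * q * (\<delta> + \<delta> / a\<^sup>2 * A) + q * (\<delta> / a\<^sup>2)"
      using \<rho> L q A by (intro add_mono mult_left_mono mult_right_mono) auto
    also have "\<dots> = K * \<delta>"
      by (simp add: K_def algebra_simps)
    finally show ?thesis
      by (simp add: \<delta>_def)
  qed
  ultimately show thesis
    using that unfolding a_def by blast
qed

lemma Fq_bounded_below_away_from_critical:
  assumes k: "2 \<le> k" and R: "0 < R" and \<epsilon>: "0 < \<epsilon>"
  shows "\<exists>\<eta>>0. \<forall>z b. z \<in> PiSet k \<longrightarrow> vnorm k z \<le> R \<longrightarrow>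
    \<epsilon> \<le> vnorm k (\<lambda>j. z j - zcr k j)
      + min (vnorm k (\<lambda>j. cos (b j) - 1)) (vnorm k (\<lambda>j. cos (b j) + 1)) \<longrightarrow>
    \<eta> \<le> Fq k z b"
proof -
  obtain K where K: "0 < K"
    and bound: "\<And>z b. z \<in> PiSet k \<Longrightarrow> vnorm k z \<le> R \<Longrightarrow> Fq k z b < exp (- R) / 2 \<Longrightarrow>
      vnorm k (\<lambda>j. z j - zcr k j)
        + min (vnorm k (\<lambda>j. cos (b j) - 1)) (vnorm k (\<lambda>j. cos (b j) + 1)) \<le> K * Fq k z b"
    using Fq_controls_distance_on_ball[OF k R] by blast
  have "min (exp (- R) / 2) (\<epsilon> / K) \<le> Fq k z b"
    if "z \<in> PiSet k" "vnorm k z \<le> R"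
      "\<epsilon> \<le> vnorm k (\<lambda>j. z j - zcr k j)
        + min (vnorm k (\<lambda>j. cos (b j) - 1)) (vnorm k (\<lambda>j. cos (b j) + 1))"
    for z b
  proof (cases "Fq k z b < exp (- R) / 2")
    case True
    then have "\<epsilon> \<le> K * Fq k z b"
      using bound[OF that(1,2) True] that(3) by linarith
    then show ?thesis
      using K by (simp add: min.coboundedI2 pos_divide_le_eq mult.commute)
  qed (simp add: min.coboundedI1)
  then show ?thesis
    using K \<epsilon> by (intro exI[of _ "min (exp (- R) / 2) (\<epsilon> / K)"]) auto
qed

lemma Fq_bounded_below_near_critical:
  assumes "2 \<le> k"
  shows "\<exists>C>0. \<forall>z b. z \<in> PiSet k \<longrightarrow>
    vnorm k (\<lambda>j. z j - zcr k j) + vnorm k (\<lambda>j. b j - pi) \<le> 1 \<longrightarrow>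
    (1 / C) * (vnorm k (\<lambda>j. z j - zcr k j) + vnorm k (\<lambda>j. b j - pi)) \<le> Fq k z b"
proof -
  obtain K where "0 < K"
    and "\<And>z b. z \<in> PiSet k \<Longrightarrow> vnorm k (\<lambda>j. z j - zcr k j) + vnorm k (\<lambda>j. b j - pi) \<le> 1 \<Longrightarrow>
      vnorm k (\<lambda>j. z j - zcr k j) + vnorm k (\<lambda>j. b j - pi) \<le> K * Fq k z b"
    using Fq_controls_distance_near_critical[OF assms] by blast
  then show ?thesis
    by (intro exI[of _ K]) (auto simp: field_simps mult.commute)
qed

theorem mainTheorem10:
  fixes k :: nat
  assumes "k \<ge> 2"
  shows "(\<forall>R>0. \<exists>\<epsilon>1>0. \<forall>\<epsilon>. 0 < \<epsilon> \<and> \<epsilon> < \<epsilon>1 \<longrightarrow>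
            (\<exists>\<eta>>0. \<forall>z b. z \<in> PiSet k \<longrightarrow> vnorm k z \<le> R \<longrightarrow>
               vnorm k (\<lambda>j. z j - zcr k j)
                 + min (vnorm k (\<lambda>j. cos (b j) - 1)) (vnorm k (\<lambda>j. cos (b j) + 1)) \<ge> \<epsilon> \<longrightarrow>
               Fq k z b \<ge> \<eta>))
       \<and> (\<exists>\<epsilon>0>0. \<exists>C>0. \<forall>z b. z \<in> PiSet k \<longrightarrow>
            vnorm k (\<lambda>j. z j - zcr k j) + vnorm k (\<lambda>j. b j - pi) \<le> \<epsilon>0 \<longrightarrow>
            Fq k z b \<ge> (1 / C) * (vnorm k (\<lambda>j. z j - zcr k j) + vnorm k (\<lambda>j. b j - pi)))"
  using Fq_bounded_below_away_from_critical[OF assms] Fq_bounded_below_near_critical[OF assms]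
    zero_less_one
  by blast

end
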